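(* Let $\mathcal{K}$ be an $N$-dimensional asymptotic class (for some positive integer $N$) of finite trees, viewed as $\mathcal{L}_t$-structures, containing arbitrarily large finite members. Then there is $H<\omega$ such that every $A\in\mathcal{K}$ has height at most $H$.
   Context: Trees: the language $\mathcal{L}_t$ has a binary relation $\le$, a constant $\varepsilon$, a binary function $\sqcap$ and a unary function $\mathtt{pred}$. A tree is an $\mathcal{L}_t$-structure in which $\le$ is a partial order with every downset $\{a:a\le b\}$ well-ordered, $\varepsilon$ is the least element, $a\sqcap a'$ is the greatest common lower bound of $a,a'$, $\mathtt{pred}(a)$ is the greatest element strictly below $a$ for $a\ne\varepsilon$, and $\mathtt{pred}(\varepsilon)=\varepsilon$. The height of an element $a$ is the least $k$ with $\mathtt{pred}^k(a)=\varepsilon$, and the height of a finite tree is the maximum height of its elements. Asymptotic classes: for a positive integer $N$, a class $\mathcal{K}$ of finite $\mathcal{L}$-structures is an $N$-dimensional asymptotic class if for every $\mathcal{L}$-formula $\varphi(x,\bar y)$ with $|\bar y|=m$ there is a finite set of triples $(d_i,\mu_i,\theta_i(\bar y))$, $i<k$, with $d_i\in\{0,\frac1N,\dots,1\}$, $\mu_i\in[0,\infty)$ (with $\mu_i>0$ unless $d_i=0$), and $\theta_i$ $\mathcal{L}$-formulas, such that: (i) the $\theta_i$ partition $A^m$ in every $A\in\mathcal{K}$; (ii) for each $i$ and $\epsilon>0$ there is $M$ such that for all $A\in\mathcal{K}$ with $|A|\ge M$ and $\bar b\in A^m$ with $A\models\theta_i(\bar b)$, $\big||\varphi(A,\bar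 b)|-\mu_i|A|^{d_i}\big|\le\epsilon|A|^{d_i}$. *)

theory Defs
  imports Complex_Main
begin

record 'a lt_struct =
  carrier :: "'a set"
  le :: "'a \<Rightarrow> 'a \<Rightarrow> bool"
  eps :: 'a
  meet :: "'a \<Rightarrow> 'a \<Rightarrow> 'a"
  pred :: "'a \<Rightarrow> 'a"

datatype trm = Var nat | Eps | Meet trm trm | Pred trm

datatype fm = Eq trm trm | Le trm trm | FFalse | Neg fm | Conj fm fm | Disj fm fm
  | Ex nat fm | All nat fm

fun tvars :: "trm \<Rightarrow> nat set" where
  "tvars (Var i) = {i}"
| "tvars Eps = {}"
| "tvars (Meet s t) = tvars s \<union> tvars t"
| "tvars (Pred t) = tvars t"

fun fv :: "fm \<Rightarrow> nat set" where
  "fv (Eq s t) = tvars s \<union> tvars t"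
| "fv (Le s t) = tvars s \<union> tvars t"
| "fv FFalse = {}"
| "fv (Neg f) = fv f"
| "fv (Conj f g) = fv f \<union> fv g"
| "fv (Disj f g) = fv f \<union> fv g"
| "fv (Ex i f) = fv f - {i}"
| "fv (All i f) = fv f - {i}"

fun teval :: "('a, 'b) lt_struct_scheme \<Rightarrow> (nat \<Rightarrow> 'a) \<Rightarrow> trm \<Rightarrow> 'a" where
  "teval A v (Var i) = v i"
| "teval A v Eps = eps A"
| "teval A v (Meet s t) = meet A (teval A v s) (teval A v t)"
| "teval A v (Pred t) = pred A (teval A v t)"

fun sat :: "('a, 'b) lt_struct_scheme \<Rightarrow> (nat \<Rightarrow> 'a) \<Rightarrow> fm \<Rightarrow> bool" where
  "sat A v (Eq s t) = (teval A v s = teval A v t)"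
| "sat A v (Le s t) = le A (teval A v s) (teval A v t)"
| "sat A v FFalse = False"
| "sat A v (Neg f) = (\<not> sat A v f)"
| "sat A v (Conj f g) = (sat A v f \<and> sat A v g)"
| "sat A v (Disj f g) = (sat A v f \<or> sat A v g)"
| "sat A v (Ex i f) = (\<exists>a\<in>carrier A. sat A (v(i := a)) f)"
| "sat A v (All i f) = (\<forall>a\<in>carrier A. sat A (v(i := a)) f)"

text \<open>Convention for a formula phi(x, y_1..y_m): x is variable 0 and y_j is variable j.\<close>

definition env :: "'a \<Rightarrow> 'a list \<Rightarrow> nat \<Rightarrow> 'a" where
  "env x bs = (\<lambda>i. if i = 0 then x else bs ! (i - 1))"

definition tuples :: "('a, 'b) lt_struct_scheme \<Rightarrow> nat \<Rightarrow> 'a list set" where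
  "tuples A m = {bs. length bs = m \<and> set bs \<subseteq> carrier A}"

definition defset :: "('a, 'b) lt_struct_scheme \<Rightarrow> fm \<Rightarrow> 'a list \<Rightarrow> 'a set" where
  "defset A \<phi> bs = {a \<in> carrier A. sat A (env a bs) \<phi>}"

text \<open>theta(bs): a formula with free variables among 1..m (the y's); evaluated
  with the x-slot filled by an arbitrary (irrelevant) value.\<close>
definition sat_par :: "('a, 'b) lt_struct_scheme \<Rightarrow> fm \<Rightarrow> 'a list \<Rightarrow> bool" where
  "sat_par A \<theta> bs = sat A (env (eps A) bs) \<theta>"

definition is_tree :: "('a, 'b) lt_struct_scheme \<Rightarrow> bool" where
  "is_tree A \<longleftrightarrow>
     eps A \<in> carrier A \<and>
     (\<forall>a\<in>carrier A. \<forall>b\<in>carrier A. meet A a b \<in> carrier A) \<and>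
     (\<forall>a\<in>carrier A. pred A a \<in> carrier A) \<and>
     \<comment> \<open>partial order\<close>
     (\<forall>a\<in>carrier A. le A a a) \<and>
     (\<forall>a\<in>carrier A. \<forall>b\<in>carrier A. le A a b \<and> le A b a \<longrightarrow> a = b) \<and>
     (\<forall>a\<in>carrier A. \<forall>b\<in>carrier A. \<forall>c\<in>carrier A. le A a b \<and> le A b c \<longrightarrow> le A a c) \<and>
     \<comment> \<open>every downset is well-ordered (linear, and every nonempty subset has a least element)\<close>
     (\<forall>b\<in>carrier A.
        (\<forall>a\<in>carrier A. \<forall>a'\<in>carrier A. le A a b \<and> le A a' b \<longrightarrow> le A a a' \<or> le A a' a) \<and>
        (\<forall>S. S \<subseteq> {a \<in> carrier A. le A a b} \<and> S \<noteq> {} \<longrightarrow>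
              (\<exists>s\<in>S. \<forall>t\<in>S. le A s t))) \<and>
     \<comment> \<open>eps is the least element\<close>
     (\<forall>a\<in>carrier A. le A (eps A) a) \<and>
     \<comment> \<open>meet is the greatest common lower bound\<close>
     (\<forall>a\<in>carrier A. \<forall>a'\<in>carrier A.
        le A (meet A a a') a \<and> le A (meet A a a') a' \<and>
        (\<forall>c\<in>carrier A. le A c a \<and> le A c a' \<longrightarrow> le A c (meet A a a'))) \<and>
     \<comment> \<open>pred a is the greatest element strictly below a, for a \<noteq> eps\<close>
     (\<forall>a\<in>carrier A. a \<noteq> eps A \<longrightarrow>
        le A (pred A a) a \<and> pred A a \<noteq> a \<and>
        (\<forall>c\<in>carrier A. le A c a \<and> c \<noteq> a \<longrightarrow> le A c (pred A a))) \<and>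
     pred A (eps A) = eps A"

definition elem_height :: "('a, 'b) lt_struct_scheme \<Rightarrow> 'a \<Rightarrow> nat" where
  "elem_height A a = (LEAST k. (pred A ^^ k) a = eps A)"

definition tree_height :: "('a, 'b) lt_struct_scheme \<Rightarrow> nat" where
  "tree_height A = Max (elem_height A ` carrier A)"

definition asymptotic_class :: "nat \<Rightarrow> ('a, 'b) lt_struct_scheme set \<Rightarrow> bool" where
  "asymptotic_class N K \<longleftrightarrow>
     (\<forall>\<phi> m. fv \<phi> \<subseteq> {..m} \<longrightarrow>
        (\<exists>D :: (real \<times> real \<times> fm) list.
           (\<forall>(d, \<mu>, \<theta>) \<in> set D.
              (\<exists>j\<le>N. d = real j / real N) \<and> \<mu> \<ge> 0 \<and> (d \<noteq> 0 \<longrightarrow> \<mu> > 0) \<and>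
              fv \<theta> \<subseteq> {1..m}) \<and>
           \<comment> \<open>(i) the theta_i partition A^m\<close>
           (\<forall>A\<in>K. \<forall>bs\<in>tuples A m.
              \<exists>!i. i < length D \<and> sat_par A (snd (snd (D ! i))) bs) \<and>
           \<comment> \<open>(ii) asymptotic counting\<close>
           (\<forall>i < length D. \<forall>\<epsilon>>0. \<exists>M::nat. \<forall>A\<in>K. card (carrier A) \<ge> M \<longrightarrow>
              (\<forall>bs\<in>tuples A m. sat_par A (snd (snd (D ! i))) bs \<longrightarrow>
                 \<bar>real (card (defset A \<phi> bs))
                    - fst (snd (D ! i)) * real (card (carrier A)) powr fst (D ! i)\<bar>
                 \<le> \<epsilon> * real (card (carrier A)) powr fst (D ! i)))))"

end

theory Submission
  imports Defs
begin

text \<open>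
  Apply the asymptotic-class axioms to the formula \<open>x \<le> y\<close>. Its instances are the downsets,
  and in a tree of height \<open>h\<close> the downset of an element of height \<open>j\<close> has exactly \<open>j + 1\<close>
  elements; since heights are realised downwards along a branch, every size \<open>1, \<dots>, h + 1\<close> occurs.
  On the other hand, the axioms split the parameters into finitely many pieces \<open>\<theta>\<^sub>i\<close> on which
  \<open>|\<phi>(A, b)| \<approx> \<mu>\<^sub>i |A|\<^bsup>d\<^sub>i\<^esup>\<close>. Once \<open>|A|\<close> is large, a bounded size can only occur on a piece with
  \<open>d\<^sub>i = 0\<close>, where it lies within \<open>1/4\<close> of \<open>\<mu>\<^sub>i\<close>; so each piece carries at most one bounded size
  and the number of bounded sizes is at most the number of pieces. As a tree has more elements
  than its height, a tall tree is large and realises too many bounded sizes.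
\<close>

lemma funpow_diff_apply: "i \<le> j \<Longrightarrow> (f ^^ (j - i)) ((f ^^ i) x) = (f ^^ j) x"
  by (metis funpow_add le_add_diff_inverse2 o_apply)

lemma eventually_powr_gt:
  fixes c d L :: real
  assumes "0 < c" and "0 < d"
  shows "\<forall>\<^sub>F n in sequentially. L < c * real n powr d"
proof -
  define Y where "Y = max 1 (L / c + 1)"
  have "0 < Y" and "L < c * Y"
    using assms by (auto simp: Y_def field_simps max_def)
  have "L < c * real n powr d" if "Y powr (1 / d) \<le> real n" for n :: nat
  proof -
    have "Y = (Y powr (1 / d)) powr d"
      using \<open>0 < Y\<close> assms by (simp add: powr_powr)
    also have "\<dots> \<le> real n powr d"
      using that assms by (intro powr_mono2) auto
    finally show ?thesis
      using \<open>L < c * Y\<close> assms by (smt (verit) mult_left_mono)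
  qed
  then have "\<forall>n\<ge>nat \<lceil>Y powr (1 / d)\<rceil>. L < c * real n powr d"
    by (meson real_nat_ceiling_ge order_trans of_nat_mono)
  then show ?thesis
    unfolding eventually_sequentially by blast
qed

lemma eventually_bounded_size_near_coefficient:
  fixes d \<mu> L :: real and size :: "'x \<Rightarrow> real"
  assumes "0 \<le> d" and "d \<noteq> 0 \<Longrightarrow> 0 < \<mu>"
    and estimate: "\<And>\<epsilon>. 0 < \<epsilon> \<Longrightarrow> \<forall>\<^sub>F n in sequentially. \<forall>x\<in>X n.
          \<bar>size x - \<mu> * real n powr d\<bar> \<le> \<epsilon> * real n powr d"
  shows "\<forall>\<^sub>F n in sequentially. \<forall>x\<in>X n. size x \<le> L \<longrightarrow> \<bar>size x - \<mu>\<bar> \<le> 1/4"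
proof (cases "d = 0")
  case True
  have "\<forall>\<^sub>F n in sequentially. 1 \<le> n" \<comment> \<open>\<open>0 powr 0 = 0\<close> in Isabelle\<close>
    by (rule eventually_ge_at_top)
  moreover have "\<forall>\<^sub>F n in sequentially. \<forall>x\<in>X n. \<bar>size x - \<mu> * real n powr d\<bar> \<le> 1/4 * real n powr d"
    by (rule estimate) simp
  ultimately show ?thesis
    by eventually_elim (auto simp: True)
next
  case False
  then have "0 < d" and "0 < \<mu>"
    using assms(1,2) by auto
  have "\<forall>\<^sub>F n in sequentially. \<forall>x\<in>X n. \<bar>size x - \<mu> * real n powr d\<bar> \<le> \<mu> / 2 * real n powr d"
    using \<open>0 < \<mu>\<close> by (intro estimate) simp
  moreover have "\<forall>\<^sub>F n in sequentially. L < \<mu> / 2 * real n powr d"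
    using \<open>0 < \<mu>\<close> \<open>0 < d\<close> by (intro eventually_powr_gt) simp_all
  ultimately show ?thesis
  proof eventually_elim
    case (elim n)
    show ?case
    proof (intro ballI impI)
      fix x assume "x \<in> X n" and "size x \<le> L"
      have "\<bar>size x - \<mu> * real n powr d\<bar> \<le> \<mu> / 2 * real n powr d"
        using elim(1) \<open>x \<in> X n\<close> by blast
      then have "\<mu> / 2 * real n powr d \<le> size x"
        by linarith
      then show "\<bar>size x - \<mu>\<bar> \<le> 1/4"
        using elim(2) \<open>size x \<le> L\<close> by linarith
    qed
  qed
qed

lemma card_le_if_near_reals:
  fixes S :: "nat set" and \<mu> :: "nat \<Rightarrow> real"
  assumes "\<And>s. s \<in> S \<Longrightarrow> \<exists>i<k. \<bar>real s - \<mu> i\<bar> \<le> 1/4"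
  shows "card S \<le> k"
proof -
  obtain piece where piece: "\<And>s. s \<in> S \<Longrightarrow> piece s < k \<and> \<bar>real s - \<mu> (piece s)\<bar> \<le> 1/4"
    using bchoice[of S "\<lambda>s i. i < k \<and> \<bar>real s - \<mu> i\<bar> \<le> 1/4"] assms by blast
  have "inj_on piece S"
  proof (rule inj_onI)
    fix s s' assume s: "s \<in> S" "s' \<in> S" and same: "piece s = piece s'"
    have "\<bar>real s - \<mu> (piece s)\<bar> \<le> 1/4" "\<bar>real s' - \<mu> (piece s)\<bar> \<le> 1/4"
      using piece[OF s(1)] piece[OF s(2)] same by simp_all
    then show "s = s'"
      by linarith
  qed
  moreover have "piece ` S \<subseteq> {..<k}"
    using piece by blast
  ultimately have "card S \<le> card {..<k}"
    by (intro card_inj_on_le) simp_all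
  then show ?thesis
    by simp
qed

definition defset_sizes :: "('a, 'b) lt_struct_scheme \<Rightarrow> fm \<Rightarrow> nat \<Rightarrow> nat set" where
  "defset_sizes A \<phi> m = (\<lambda>bs. card (defset A \<phi> bs)) ` tuples A m"

lemma asymptotic_class_bounded_small_sizes:
  assumes "asymptotic_class N K" and "fv \<phi> \<subseteq> {..m}"
  shows "\<exists>k. \<forall>L. \<exists>M. \<forall>A\<in>K. M \<le> card (carrier A) \<longrightarrow> card (defset_sizes A \<phi> m \<inter> {..L}) \<le> k"
proof -
  from assms(1)[unfolded asymptotic_class_def, rule_format, OF assms(2)]
  obtain D :: "(real \<times> real \<times> fm) list" where
    pieces: "\<forall>(d, \<mu>, \<theta>)\<in>set D.
      (\<exists>j\<le>N. d = real j / real N) \<and> 0 \<le> \<mu> \<and> (d \<noteq> 0 \<longrightarrow> 0 < \<mu>) \<and> fv \<theta> \<subseteq> {1..m}"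
    and partition: "\<forall>A\<in>K. \<forall>bs\<in>tuples A m. \<exists>!i. i < length D \<and> sat_par A (snd (snd (D ! i))) bs"
    and estimate: "\<forall>i<length D. \<forall>\<epsilon>>0. \<exists>M::nat. \<forall>A\<in>K. M \<le> card (carrier A) \<longrightarrow>
      (\<forall>bs\<in>tuples A m. sat_par A (snd (snd (D ! i))) bs \<longrightarrow>
        \<bar>real (card (defset A \<phi> bs)) - fst (snd (D ! i)) * real (card (carrier A)) powr fst (D ! i)\<bar>
          \<le> \<epsilon> * real (card (carrier A)) powr fst (D ! i))"
    by (elim exE conjE) (rule that)
  define d where "d i = fst (D ! i)" for i
  define \<mu> where "\<mu> i = fst (snd (D ! i))" for i
  define \<theta> where "\<theta> i = snd (snd (D ! i))" for i
  define size :: "('a, 'b) lt_struct_scheme \<times> 'a list \<Rightarrow> real"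
    where "size = (\<lambda>(A, bs). real (card (defset A \<phi> bs)))"
  define X where "X i n = {(A, bs). A \<in> K \<and> card (carrier A) = n \<and> bs \<in> tuples A m \<and> sat_par A (\<theta> i) bs}"
    for i n
  have near: "\<forall>\<^sub>F n in sequentially. \<forall>x\<in>X i n. size x \<le> L \<longrightarrow> \<bar>size x - \<mu> i\<bar> \<le> 1/4"
    if i: "i < length D" for i and L :: real
  proof (rule eventually_bounded_size_near_coefficient)
    obtain d' \<mu>' \<theta>' where Di: "D ! i = (d', \<mu>', \<theta>')"
      by (cases "D ! i")
    then have "(\<exists>j\<le>N. d' = real j / real N) \<and> (d' \<noteq> 0 \<longrightarrow> 0 < \<mu>')"
      using bspec[OF pieces nth_mem[OF i]] by simp
    then show "0 \<le> d i" and "d i \<noteq> 0 \<Longrightarrow> 0 < \<mu> i"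
      using Di unfolding d_def \<mu>_def by auto
  next
    fix \<epsilon> :: real assume "0 < \<epsilon>"
    then obtain M :: nat where "\<forall>A\<in>K. M \<le> card (carrier A) \<longrightarrow> (\<forall>bs\<in>tuples A m. sat_par A (\<theta> i) bs \<longrightarrow>
        \<bar>real (card (defset A \<phi> bs)) - \<mu> i * real (card (carrier A)) powr d i\<bar>
          \<le> \<epsilon> * real (card (carrier A)) powr d i)"
      using estimate i unfolding d_def \<mu>_def \<theta>_def by blast
    then show "\<forall>\<^sub>F n in sequentially. \<forall>x\<in>X i n. \<bar>size x - \<mu> i * real n powr d i\<bar> \<le> \<epsilon> * real n powr d i"
      unfolding eventually_sequentially X_def size_def by auto
  qed
  show ?thesis
  proof (rule exI[of _ "length D"], intro allI)
    fix L :: nat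
    have "\<forall>\<^sub>F n in sequentially. \<forall>i\<in>{..<length D}. \<forall>x\<in>X i n. size x \<le> real L \<longrightarrow> \<bar>size x - \<mu> i\<bar> \<le> 1/4"
      using near by (intro eventually_ball_finite) auto
    then obtain M where M: "\<And>n i x. \<lbrakk>M \<le> n; i < length D; x \<in> X i n; size x \<le> real L\<rbrakk>
        \<Longrightarrow> \<bar>size x - \<mu> i\<bar> \<le> 1/4"
      unfolding eventually_sequentially by auto
    show "\<exists>M. \<forall>A\<in>K. M \<le> card (carrier A) \<longrightarrow> card (defset_sizes A \<phi> m \<inter> {..L}) \<le> length D"
    proof (intro exI[of _ M] ballI impI)
      fix A assume A: "A \<in> K" "M \<le> card (carrier A)"
      let ?S = "defset_sizes A \<phi> m \<inter> {..L}"
      show "card ?S \<le> length D"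
      proof (rule card_le_if_near_reals)
        fix s assume s: "s \<in> ?S"
        obtain bs where bs: "bs \<in> tuples A m" "s = card (defset A \<phi> bs)" "s \<le> L"
          using s unfolding defset_sizes_def by auto
        obtain i where "i < length D" "sat_par A (\<theta> i) bs"
          using partition A(1) bs(1) unfolding \<theta>_def by blast
        then show "\<exists>i<length D. \<bar>real s - \<mu> i\<bar> \<le> 1/4"
          using M[OF A(2), of i "(A, bs)"] A(1) bs unfolding X_def size_def by auto
      qed
    qed
  qed
qed

definition downset :: "('a, 'b) lt_struct_scheme \<Rightarrow> 'a \<Rightarrow> 'a set" where
  "downset A c = {a \<in> carrier A. le A a c}"

lemma downset_sizes_subset_defset_sizes:
  "(\<lambda>c. card (downset A c)) ` carrier A \<subseteq> defset_sizes A (Le (Var 0) (Var 1)) 1"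
proof
  fix s assume "s \<in> (\<lambda>c. card (downset A c)) ` carrier A"
  then obtain c where c: "c \<in> carrier A" "s = card (downset A c)"
    by blast
  then have "[c] \<in> tuples A 1" and "defset A (Le (Var 0) (Var 1)) [c] = downset A c"
    by (auto simp: tuples_def defset_def downset_def env_def)
  then show "s \<in> defset_sizes A (Le (Var 0) (Var 1)) 1"
    unfolding defset_sizes_def using c(2) by (intro image_eqI[of _ _ "[c]"]) simp_all
qed

locale lt_tree =
  fixes A :: "('a, 'b) lt_struct_scheme"
  assumes is_tree: "is_tree A"
begin

lemma tree_axioms:
  "eps A \<in> carrier A"
  "\<forall>a\<in>carrier A. pred A a \<in> carrier A"
  "\<forall>a\<in>carrier A. le A a a"
  "\<forall>a\<in>carrier A. \<forall>b\<in>carrier A. le A a b \<and> le A b a \<longrightarrow> a = b"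
  "\<forall>a\<in>carrier A. \<forall>b\<in>carrier A. \<forall>c\<in>carrier A. le A a b \<and> le A b c \<longrightarrow> le A a c"
  "\<forall>b\<in>carrier A.
     (\<forall>a\<in>carrier A. \<forall>a'\<in>carrier A. le A a b \<and> le A a' b \<longrightarrow> le A a a' \<or> le A a' a) \<and>
     (\<forall>S. S \<subseteq> {a \<in> carrier A. le A a b} \<and> S \<noteq> {} \<longrightarrow> (\<exists>s\<in>S. \<forall>t\<in>S. le A s t))"
  "\<forall>a\<in>carrier A. le A (eps A) a"
  "\<forall>a\<in>carrier A. a \<noteq> eps A \<longrightarrow>
     le A (pred A a) a \<and> pred A a \<noteq> a \<and>
     (\<forall>c\<in>carrier A. le A c a \<and> c \<noteq> a \<longrightarrow> le A c (pred A a))"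
  "pred A (eps A) = eps A"
  using is_tree unfolding is_tree_def by - (elim conjE, assumption)+

lemma eps_closed: "eps A \<in> carrier A"
  by (fact tree_axioms(1))

lemma pred_closed: "a \<in> carrier A \<Longrightarrow> pred A a \<in> carrier A"
  using tree_axioms(2) by blast

lemma le_refl: "a \<in> carrier A \<Longrightarrow> le A a a"
  using tree_axioms(3) by blast

lemma le_antisym: "\<lbrakk>a \<in> carrier A; b \<in> carrier A; le A a b; le A b a\<rbrakk> \<Longrightarrow> a = b"
  using tree_axioms(4) by blast

lemma le_trans: "\<lbrakk>a \<in> carrier A; b \<in> carrier A; c \<in> carrier A; le A a b; le A b c\<rbrakk> \<Longrightarrow> le A a c"
  using tree_axioms(5) by blast

lemma downset_has_least:
  "\<lbrakk>b \<in> carrier A; S \<subseteq> downset A b; S \<noteq> {}\<rbrakk> \<Longrightarrow> \<exists>s\<in>S. \<forall>t\<in>S. le A s t"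
  using tree_axioms(6) unfolding downset_def by blast

lemma eps_least: "a \<in> carrier A \<Longrightarrow> le A (eps A) a"
  using tree_axioms(7) by blast

lemma pred_less: "\<lbrakk>a \<in> carrier A; a \<noteq> eps A\<rbrakk> \<Longrightarrow> le A (pred A a) a \<and> pred A a \<noteq> a"
  using tree_axioms(8) by blast

lemma le_pred_if_less:
  "\<lbrakk>a \<in> carrier A; a \<noteq> eps A; c \<in> carrier A; le A c a; c \<noteq> a\<rbrakk> \<Longrightarrow> le A c (pred A a)"
  using tree_axioms(8) by blast

lemma pred_eps: "pred A (eps A) = eps A"
  by (fact tree_axioms(9))

lemma pred_le: "a \<in> carrier A \<Longrightarrow> le A (pred A a) a"
  using pred_less pred_eps le_refl by (cases "a = eps A") auto

lemma funpow_pred_closed: "c \<in> carrier A \<Longrightarrow> (pred A ^^ i) c \<in> carrier A"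
  by (induction i) (auto simp: pred_closed)

lemma funpow_pred_le: "c \<in> carrier A \<Longrightarrow> le A ((pred A ^^ i) c) c"
proof (induction i)
  case 0
  then show ?case by (simp add: le_refl)
next
  case (Suc i)
  let ?x = "(pred A ^^ i) c"
  have "?x \<in> carrier A"
    using funpow_pred_closed Suc.prems .
  then have "le A (pred A ?x) c"
    using le_trans[OF pred_closed _ Suc.prems pred_le Suc.IH] Suc.prems by blast
  then show ?case by simp
qed

lemma funpow_pred_reaches_eps:
  assumes c: "c \<in> carrier A"
  shows "\<exists>k. (pred A ^^ k) c = eps A"
proof (rule ccontr)
  assume never: "\<nexists>k. (pred A ^^ k) c = eps A"
  let ?S = "range (\<lambda>k. (pred A ^^ k) c)"
  have "?S \<subseteq> downset A c"
    using funpow_pred_closed funpow_pred_le c by (auto simp: downset_def)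
  then obtain k where least: "\<forall>t\<in>?S. le A ((pred A ^^ k) c) t"
    using downset_has_least[OF c] by blast
  define s where "s = (pred A ^^ k) c"
  have s: "s \<in> carrier A" "s \<noteq> eps A"
    using funpow_pred_closed c never by (auto simp: s_def)
  have "pred A s \<in> ?S"
    using rangeI[of "\<lambda>k. (pred A ^^ k) c" "Suc k"] by (simp add: s_def)
  then have "le A s (pred A s)"
    using least by (simp only: s_def)
  moreover have "le A (pred A s) s" and "pred A s \<noteq> s"
    using pred_less s by blast+
  ultimately show False
    using le_antisym pred_closed s by blast
qed

lemma funpow_pred_antimono:
  assumes "c \<in> carrier A" and "i \<le> j"
  shows "le A ((pred A ^^ j) c) ((pred A ^^ i) c)"
proof -
  have "le A ((pred A ^^ (j - i)) ((pred A ^^ i) c)) ((pred A ^^ i) c)"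
    using funpow_pred_le funpow_pred_closed assms(1) by simp
  then show ?thesis
    by (simp only: funpow_diff_apply[OF assms(2)])
qed

lemma le_funpow_pred_or_above:
  assumes c: "c \<in> carrier A" and a: "a \<in> carrier A" "le A a c"
  shows "le A a ((pred A ^^ j) c) \<or> (\<exists>i<j. a = (pred A ^^ i) c)"
proof (induction j)
  case 0
  then show ?case using a by simp
next
  case (Suc j)
  let ?x = "(pred A ^^ j) c"
  have x: "?x \<in> carrier A"
    using funpow_pred_closed c .
  consider "\<exists>i<j. a = (pred A ^^ i) c" | "a = ?x" | "le A a ?x" "a \<noteq> ?x" "?x \<noteq> eps A"
    | "le A a ?x" "?x = eps A"
    using Suc.IH by blast
  then show ?case
  proof cases
    case 3
    then show ?thesis using le_pred_if_less[OF x _ a(1)] by simp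
  next
    case 4
    then have "a = ?x" using le_antisym[OF a(1) x] eps_least[OF a(1)] by simp
    then show ?thesis by blast
  qed (auto intro: less_SucI)
qed

lemma funpow_elem_height: "c \<in> carrier A \<Longrightarrow> (pred A ^^ elem_height A c) c = eps A"
  unfolding elem_height_def by (rule LeastI_ex[OF funpow_pred_reaches_eps])

lemma funpow_below_elem_height: "i < elem_height A c \<Longrightarrow> (pred A ^^ i) c \<noteq> eps A"
  unfolding elem_height_def by (rule not_less_Least)

lemma downset_eq_funpow_pred_image:
  assumes c: "c \<in> carrier A"
  shows "downset A c = (\<lambda>i. (pred A ^^ i) c) ` {..elem_height A c}"
proof
  show "downset A c \<subseteq> (\<lambda>i. (pred A ^^ i) c) ` {..elem_height A c}"
  proof
    fix a assume "a \<in> downset A c"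
    then have a: "a \<in> carrier A" "le A a c"
      by (auto simp: downset_def)
    let ?h = "elem_height A c"
    have "le A a ((pred A ^^ ?h) c) \<longrightarrow> a = (pred A ^^ ?h) c"
      using funpow_elem_height[OF c] le_antisym[OF a(1) eps_closed] eps_least[OF a(1)] by simp
    then show "a \<in> (\<lambda>i. (pred A ^^ i) c) ` {..?h}"
      using le_funpow_pred_or_above[OF c a, of ?h] by force
  qed
  show "(\<lambda>i. (pred A ^^ i) c) ` {..elem_height A c} \<subseteq> downset A c"
    using funpow_pred_closed funpow_pred_le c by (auto simp: downset_def)
qed

lemma inj_on_funpow_pred:
  assumes c: "c \<in> carrier A"
  shows "inj_on (\<lambda>i. (pred A ^^ i) c) {..elem_height A c}"
proof -
  have "(pred A ^^ j) c \<noteq> (pred A ^^ i) c" if "i < j" "j \<le> elem_height A c" for i j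
  proof
    let ?x = "(pred A ^^ i) c"
    assume eq: "(pred A ^^ j) c = ?x"
    have x: "?x \<in> carrier A" "?x \<noteq> eps A"
      using funpow_pred_closed c funpow_below_elem_height that by auto
    have "le A ?x (pred A ?x)"
      using funpow_pred_antimono[OF c, of "Suc i" j] eq that by simp
    then show False
      using pred_less[OF x] le_antisym[OF x(1) pred_closed[OF x(1)]] by simp
  qed
  then show ?thesis
    by (intro inj_onI) (metis atMost_iff linorder_neq_iff)
qed

lemma card_downset: "c \<in> carrier A \<Longrightarrow> card (downset A c) = elem_height A c + 1"
  by (simp add: downset_eq_funpow_pred_image card_image inj_on_funpow_pred)

lemma elem_height_funpow_pred:
  assumes c: "c \<in> carrier A" and i: "i \<le> elem_height A c"
  shows "elem_height A ((pred A ^^ i) c) = elem_height A c - i"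
  unfolding elem_height_def[of A "(pred A ^^ i) c"]
proof (rule Least_equality)
  show "(pred A ^^ (elem_height A c - i)) ((pred A ^^ i) c) = eps A"
    by (simp only: funpow_diff_apply[OF i] funpow_elem_height[OF c])
next
  fix k assume "(pred A ^^ k) ((pred A ^^ i) c) = eps A"
  then have "(pred A ^^ (k + i)) c = eps A"
    by (simp add: funpow_add)
  then have "\<not> k + i < elem_height A c"
    using funpow_below_elem_height by blast
  then show "elem_height A c - i \<le> k"
    by simp
qed

lemma tree_height_attained:
  assumes "finite (carrier A)"
  obtains b where "b \<in> carrier A" and "elem_height A b = tree_height A"
proof -
  have "tree_height A \<in> elem_height A ` carrier A"
    unfolding tree_height_def using assms eps_closed by (intro Max_in) auto
  then show ?thesis
    using that by (auto elim: imageE)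
qed

lemma elem_heights_cover_atMost_tree_height:
  assumes "finite (carrier A)"
  shows "{..tree_height A} \<subseteq> elem_height A ` carrier A"
proof
  fix j assume j: "j \<in> {..tree_height A}"
  obtain b where b: "b \<in> carrier A" "elem_height A b = tree_height A"
    using tree_height_attained assms by blast
  let ?i = "tree_height A - j"
  have "elem_height A ((pred A ^^ ?i) b) = j"
    using elem_height_funpow_pred[OF b(1), of ?i] b(2) j by simp
  then show "j \<in> elem_height A ` carrier A"
    using funpow_pred_closed[OF b(1)] by (rule image_eqI[OF sym])
qed

lemma tree_height_less_card:
  assumes "finite (carrier A)"
  shows "tree_height A < card (carrier A)"
proof -
  obtain b where b: "b \<in> carrier A" "elem_height A b = tree_height A"
    using tree_height_attained assms by blast
  have "card (downset A b) \<le> card (carrier A)"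
    using assms by (intro card_mono) (auto simp: downset_def)
  then show ?thesis
    using card_downset[OF b(1)] b(2) by simp
qed

lemma downset_sizes_cover:
  assumes "finite (carrier A)"
  shows "Suc ` {..tree_height A} \<subseteq> (\<lambda>c. card (downset A c)) ` carrier A"
proof -
  have "Suc ` {..tree_height A} \<subseteq> Suc ` elem_height A ` carrier A"
    by (rule image_mono[OF elem_heights_cover_atMost_tree_height[OF assms]])
  also have "\<dots> = (\<lambda>c. card (downset A c)) ` carrier A"
    unfolding image_comp by (rule image_cong) (simp_all add: card_downset)
  finally show ?thesis .
qed

lemma card_defset_sizes_Le:
  assumes "finite (carrier A)" and "L \<le> tree_height A + 1"
  shows "L \<le> card (defset_sizes A (Le (Var 0) (Var 1)) 1 \<inter> {..L})"
proof -
  have "{1..L} \<subseteq> {1..Suc (tree_height A)}"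
    using assms(2) by simp
  also have "\<dots> = Suc ` {..tree_height A}"
    by (simp only: image_Suc_atMost)
  also have "\<dots> \<subseteq> (\<lambda>c. card (downset A c)) ` carrier A"
    by (rule downset_sizes_cover[OF assms(1)])
  also have "\<dots> \<subseteq> defset_sizes A (Le (Var 0) (Var 1)) 1"
    by (rule downset_sizes_subset_defset_sizes)
  finally have "{1..L} \<subseteq> defset_sizes A (Le (Var 0) (Var 1)) 1 \<inter> {..L}"
    by auto
  then have "card {1..L} \<le> card (defset_sizes A (Le (Var 0) (Var 1)) 1 \<inter> {..L})"
    by (intro card_mono) simp_all
  then show ?thesis
    by simp
qed

end

theorem mainTheorem16:
  fixes K :: "'a lt_struct set" and N :: nat
  assumes "N > 0"
    and "\<forall>A\<in>K. finite (carrier A) \<and> is_tree A"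
    and "asymptotic_class N K"
    and "\<forall>n. \<exists>A\<in>K. card (carrier A) \<ge> n"
  shows "\<exists>H::nat. \<forall>A\<in>K. tree_height A \<le> H"
proof -
  define \<phi> where "\<phi> = Le (Var 0) (Var 1)"
  obtain k where "\<forall>L. \<exists>M. \<forall>A\<in>K. M \<le> card (carrier A) \<longrightarrow> card (defset_sizes A \<phi> 1 \<inter> {..L}) \<le> k"
    using asymptotic_class_bounded_small_sizes[OF assms(3), of \<phi> 1] by (auto simp: \<phi>_def)
  then obtain M where M: "\<And>A. \<lbrakk>A \<in> K; M \<le> card (carrier A)\<rbrakk> \<Longrightarrow> card (defset_sizes A \<phi> 1 \<inter> {..k + 1}) \<le> k"
    by blast
  have "tree_height A < M + k" if A: "A \<in> K" for A
  proof (rule ccontr)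
    assume high: "\<not> tree_height A < M + k"
    have fin: "finite (carrier A)" and "is_tree A"
      using assms(2) A by blast+
    then have tree: "lt_tree A"
      by (intro lt_tree.intro)
    have "M \<le> card (carrier A)"
      using lt_tree.tree_height_less_card[OF tree fin] high by linarith
    moreover have "k + 1 \<le> card (defset_sizes A \<phi> 1 \<inter> {..k + 1})"
      unfolding \<phi>_def using lt_tree.card_defset_sizes_Le[OF tree fin] high by simp
    ultimately show False
      using M[OF A] by linarith
  qed
  then show ?thesis
    by (intro exI[of _ "M + k"]) (simp add: less_imp_le)
qed

end
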